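(* For every $n\geq 3$, $$|S_n(123,132,3421)|=|S_n(123,213,3421)|=3n-5.$$
   Context: Permutations are written in one-line notation. A permutation $\sigma\in S_n$ contains $\pi\in S_m$ if there are indices $i_1<\dots<i_m$ such that for all $j<l$, $\sigma_{i_j}<\sigma_{i_l}$ iff $\pi_j<\pi_l$; otherwise $\sigma$ avoids $\pi$. $S_n(\pi^{(1)},\dots,\pi^{(r)})$ is the set of permutations in $S_n$ avoiding all the listed patterns. *)

theory Defs
  imports Main
begin

definition perms :: "nat \<Rightarrow> nat list set" where
  "perms n = {s. distinct s \<and> set s = {1..n}}"

definition contains :: "nat list \<Rightarrow> nat list \<Rightarrow> bool" where
  "contains sigma pi \<longleftrightarrow>
     (\<exists>idx :: nat \<Rightarrow> nat.
        (\<forall>j<length pi. idx j < length sigma) \<and>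
        (\<forall>j l. j < l \<and> l < length pi \<longrightarrow> idx j < idx l) \<and>
        (\<forall>j l. j < l \<and> l < length pi \<longrightarrow>
            (sigma ! idx j < sigma ! idx l \<longleftrightarrow> pi ! j < pi ! l)))"

definition avoids :: "nat list \<Rightarrow> nat list \<Rightarrow> bool" where
  "avoids sigma pi \<longleftrightarrow> \<not> contains sigma pi"

definition Av :: "nat \<Rightarrow> nat list list \<Rightarrow> nat list set" where
  "Av n pats = {s \<in> perms n. \<forall>p \<in> set pats. avoids s p}"

end

theory Submission
  imports Defs
begin

text \<open>No pattern of either class begins with its largest entry, so a permutation of [n]
  starting with n lies in the class iff its tail does. In a class member with n at
  position p > 0, the pattern 123 forces the entries before n to decrease.
  For \<open>{123, 132, 3421}\<close>, 132 puts every entry after n below every entry before it, and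
  3421 then makes the entries after n increase; by 123 there are at most two of them, so the
  permutation is n-1, ..., n-p, n, 1, ..., n-p-1 with p \<ge> n-3.
  For \<open>{123, 213, 3421}\<close>, 123 and 213 forbid an entry with two smaller entries before it,
  so n sits at position 1 and the entries above the first entry a decrease; 3421 makes the
  entries below a increase, so the permutation is a, n, n-1, ..., a+1, 1, ..., a-1, and
  a \<le> 3 by 123.
  Either way there are min(3, n-1) such permutations, so the class sizes satisfy
  c(n) = c(n-1) + min(3, n-1) with c(0) = 1, which gives 3n - 5 for n \<ge> 3.\<close>

lemma contains_3_iff:
  "contains s [a,b,c] \<longleftrightarrow> (\<exists>i j k. i < j \<and> j < k \<and> k < length s \<and>
     (s!i < s!j \<longleftrightarrow> a < b) \<and> (s!i < s!k \<longleftrightarrow> a < c) \<and> (s!j < s!k \<longleftrightarrow> b < c))"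
  (is "_ \<longleftrightarrow> ?indices")
proof
  assume "contains s [a,b,c]"
  then obtain idx where len: "\<forall>j<length [a,b,c]. idx j < length s"
    and mono: "\<forall>j l. j < l \<and> l < length [a,b,c] \<longrightarrow> idx j < idx l"
    and order: "\<forall>j l. j < l \<and> l < length [a,b,c] \<longrightarrow>
                  (s!idx j < s!idx l \<longleftrightarrow> [a,b,c]!j < [a,b,c]!l)"
    unfolding contains_def by blast
  show ?indices
    using len[rule_format, of 2] mono[rule_format, of 0 1] mono[rule_format, of 1 2]
      order[rule_format, of 0 1] order[rule_format, of 0 2] order[rule_format, of 1 2]
    by (intro exI[of _ "idx 0"] exI[of _ "idx 1"] exI[of _ "idx 2"]) simp
next
  assume ?indices
  then obtain i j k where "i < j" "j < k" "k < length s" "s!i < s!j \<longleftrightarrow> a < b"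
    "s!i < s!k \<longleftrightarrow> a < c" "s!j < s!k \<longleftrightarrow> b < c" by blast
  then show "contains s [a,b,c]"
    unfolding contains_def
    by (intro exI[of _ "(!) [i,j,k]"]) (auto simp: numeral_eq_Suc less_Suc_eq nth_Cons')
qed

lemma contains_4_iff:
  "contains s [a,b,c,d] \<longleftrightarrow> (\<exists>i j k l. i < j \<and> j < k \<and> k < l \<and> l < length s \<and>
     (s!i < s!j \<longleftrightarrow> a < b) \<and> (s!i < s!k \<longleftrightarrow> a < c) \<and> (s!i < s!l \<longleftrightarrow> a < d) \<and>
     (s!j < s!k \<longleftrightarrow> b < c) \<and> (s!j < s!l \<longleftrightarrow> b < d) \<and> (s!k < s!l \<longleftrightarrow> c < d))"
  (is "_ \<longleftrightarrow> ?indices")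
proof
  assume "contains s [a,b,c,d]"
  then obtain idx where len: "\<forall>j<length [a,b,c,d]. idx j < length s"
    and mono: "\<forall>j l. j < l \<and> l < length [a,b,c,d] \<longrightarrow> idx j < idx l"
    and order: "\<forall>j l. j < l \<and> l < length [a,b,c,d] \<longrightarrow>
                  (s!idx j < s!idx l \<longleftrightarrow> [a,b,c,d]!j < [a,b,c,d]!l)"
    unfolding contains_def by blast
  show ?indices
    using len[rule_format, of 3] mono[rule_format, of 0 1] mono[rule_format, of 1 2]
      mono[rule_format, of 2 3] order[rule_format, of 0 1] order[rule_format, of 0 2]
      order[rule_format, of 0 3] order[rule_format, of 1 2] order[rule_format, of 1 3]
      order[rule_format, of 2 3]
    by (intro exI[of _ "idx 0"] exI[of _ "idx 1"] exI[of _ "idx 2"] exI[of _ "idx 3"])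
      (simp add: numeral_eq_Suc)
next
  assume ?indices
  then obtain i j k l where "i < j" "j < k" "k < l" "l < length s"
    "s!i < s!j \<longleftrightarrow> a < b" "s!i < s!k \<longleftrightarrow> a < c" "s!i < s!l \<longleftrightarrow> a < d"
    "s!j < s!k \<longleftrightarrow> b < c" "s!j < s!l \<longleftrightarrow> b < d" "s!k < s!l \<longleftrightarrow> c < d" by blast
  moreover have "j' < 4 \<Longrightarrow> j' = 0 \<or> j' = 1 \<or> j' = 2 \<or> j' = 3" for j' :: nat
    by arith
  moreover have "j' < l' \<Longrightarrow> l' < 4 \<Longrightarrow> (j' = 0 \<and> l' = 1) \<or> (j' = 0 \<and> l' = 2) \<or>
      (j' = 0 \<and> l' = 3) \<or> (j' = 1 \<and> l' = 2) \<or> (j' = 1 \<and> l' = 3) \<or> (j' = 2 \<and> l' = 3)"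
    for j' l' :: nat
    by arith
  ultimately show "contains s [a,b,c,d]"
    unfolding contains_def
    by (intro exI[of _ "\<lambda>t. if t = 0 then i else if t = 1 then j else if t = 2 then k else l"])
      (auto simp: numeral_eq_Suc)
qed

lemma avoids_3D:
  "avoids s [a,b,c] \<Longrightarrow> i < j \<Longrightarrow> j < k \<Longrightarrow> k < length s \<Longrightarrow>
     \<not> ((s!i < s!j \<longleftrightarrow> a < b) \<and> (s!i < s!k \<longleftrightarrow> a < c) \<and> (s!j < s!k \<longleftrightarrow> b < c))"
  unfolding avoids_def contains_3_iff by blast

lemma avoids_4D:
  "avoids s [a,b,c,d] \<Longrightarrow> i < j \<Longrightarrow> j < k \<Longrightarrow> k < l \<Longrightarrow> l < length s \<Longrightarrow>
     \<not> ((s!i < s!j \<longleftrightarrow> a < b) \<and> (s!i < s!k \<longleftrightarrow> a < c) \<and> (s!i < s!l \<longleftrightarrow> a < d) \<and>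
        (s!j < s!k \<longleftrightarrow> b < c) \<and> (s!j < s!l \<longleftrightarrow> b < d) \<and> (s!k < s!l \<longleftrightarrow> c < d))"
  unfolding avoids_def contains_4_iff by blast

lemma avoids_123D:
  "avoids s [1,2,3] \<Longrightarrow> i < j \<Longrightarrow> j < k \<Longrightarrow> k < length s \<Longrightarrow> \<not> (s!i < s!j \<and> s!j < s!k)"
  using avoids_3D[of s 1 2 3 i j k] by auto

lemma avoids_132D:
  "avoids s [1,3,2] \<Longrightarrow> i < j \<Longrightarrow> j < k \<Longrightarrow> k < length s \<Longrightarrow> \<not> (s!i < s!k \<and> s!k \<le> s!j)"
  using avoids_3D[of s 1 3 2 i j k] by auto

lemma avoids_213D:
  "avoids s [2,1,3] \<Longrightarrow> i < j \<Longrightarrow> j < k \<Longrightarrow> k < length s \<Longrightarrow> \<not> (s!j \<le> s!i \<and> s!i < s!k)"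
  using avoids_3D[of s 2 1 3 i j k] by auto

lemma avoids_3421D:
  "avoids s [3,4,2,1] \<Longrightarrow> i < j \<Longrightarrow> j < k \<Longrightarrow> k < l \<Longrightarrow> l < length s \<Longrightarrow>
     \<not> (s!i < s!j \<and> s!k \<le> s!i \<and> s!l \<le> s!k)"
  using avoids_4D[of s 3 4 2 1 i j k l] by auto

lemma avoids_123_213D:
  assumes "avoids s [1,2,3]" "avoids s [2,1,3]" "i < j" "j < k" "k < length s"
  shows "\<not> (s!i < s!k \<and> s!j < s!k)"
  using avoids_123D[OF assms(1,3-5)] avoids_213D[OF assms(2-5)] by fastforce

lemma contains_ConsI:
  assumes "contains t p"
  shows "contains (x # t) p"
proof -
  obtain idx where "\<forall>j<length p. idx j < length t" "\<forall>j l. j < l \<and> l < length p \<longrightarrow> idx j < idx l"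
    "\<forall>j l. j < l \<and> l < length p \<longrightarrow> (t!idx j < t!idx l \<longleftrightarrow> p!j < p!l)"
    using assms unfolding contains_def by blast
  then show ?thesis
    unfolding contains_def by (intro exI[of _ "Suc \<circ> idx"]) auto
qed

definition starts_below_max :: "nat list \<Rightarrow> bool" where
  "starts_below_max p \<longleftrightarrow> (\<exists>l<length p. p!0 < p!l)"

lemma contains_Cons_greaterD:
  assumes "contains (x # t) p" and greater: "\<forall>y\<in>set t. y < x" and "starts_below_max p"
  shows "contains t p"
proof -
  obtain l where l: "0 < l" "l < length p" "p!0 < p!l"
    using \<open>starts_below_max p\<close> unfolding starts_below_max_def by (metis gr0I less_irrefl)
  obtain idx where len: "\<forall>j<length p. idx j < length (x # t)"
    and mono: "\<forall>j l. j < l \<and> l < length p \<longrightarrow> idx j < idx l"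
    and order: "\<forall>j l. j < l \<and> l < length p \<longrightarrow> ((x # t)!idx j < (x # t)!idx l \<longleftrightarrow> p!j < p!l)"
    using assms(1) unfolding contains_def by blast
  have "idx 0 \<noteq> 0"
  proof
    assume first: "idx 0 = 0"
    then have "0 < idx l" "idx l < Suc (length t)"
      using mono[rule_format, of 0 l] len l by auto
    with first have "(x # t)!idx l < (x # t)!idx 0"
      using greater by (simp add: nth_Cons')
    with order[rule_format, of 0 l] l show False by auto
  qed
  with mono have "\<forall>j<length p. idx j \<noteq> 0" by (metis gr0I not_less0)
  with len mono order show ?thesis
    unfolding contains_def
    by (intro exI[of _ "\<lambda>j. idx j - 1"]) (auto simp: nth_Cons' less_diff_conv2 Suc_leI)
qed

lemma mem_Av_iff: "s \<in> Av n pats \<longleftrightarrow> distinct s \<and> set s = {1..n} \<and> (\<forall>p\<in>set pats. avoids s p)"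
  by (simp add: Av_def perms_def)

lemma length_perm: "distinct s \<Longrightarrow> set s = {1..n} \<Longrightarrow> length s = n"
  by (metis card_atLeastAtMost diff_Suc_1 distinct_card)

lemma finite_Av: "finite (Av n pats)"
proof (rule finite_subset)
  show "Av n pats \<subseteq> {s. set s \<subseteq> {1..n} \<and> length s = n}"
    by (auto simp: mem_Av_iff length_perm)
  show "finite {s. set s \<subseteq> {1..n} \<and> length s = n}"
    by (rule finite_lists_length_eq) simp
qed

lemma Av_0: "\<forall>p\<in>set pats. p \<noteq> [] \<Longrightarrow> Av 0 pats = {[]}"
  by (auto simp: mem_Av_iff avoids_def contains_def) (metis length_greater_0_conv)

lemma Cons_mem_Av_iff:
  assumes "\<forall>p\<in>set pats. starts_below_max p"
  shows "Suc m # t \<in> Av (Suc m) pats \<longleftrightarrow> t \<in> Av m pats"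
proof -
  have "set (Suc m # t) = {1..Suc m} \<longleftrightarrow> set t = {1..m}" if "Suc m \<notin> set t"
    using that by (simp add: atLeastAtMostSuc_conv insert_ident)
  moreover have "avoids (Suc m # t) p \<longleftrightarrow> avoids t p"
    if "p \<in> set pats" "set t = {1..m}" for p
    using that assms contains_ConsI contains_Cons_greaterD[of "Suc m" t p]
    unfolding avoids_def by fastforce
  ultimately show ?thesis
    by (auto simp: mem_Av_iff)
qed

lemma card_Av_Suc:
  assumes "\<forall>p\<in>set pats. starts_below_max p"
  shows "card (Av (Suc m) pats) = card (Av m pats) + card {s \<in> Av (Suc m) pats. hd s \<noteq> Suc m}"
proof -
  let ?max_first = "{s \<in> Av (Suc m) pats. hd s = Suc m}"
  let ?others = "{s \<in> Av (Suc m) pats. hd s \<noteq> Suc m}"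
  have max_first: "?max_first = Cons (Suc m) ` Av m pats"
  proof (intro set_eqI iffI)
    fix s assume s: "s \<in> ?max_first"
    then have "s = Suc m # tl s" by (cases s) (auto simp: mem_Av_iff)
    moreover from s this have "tl s \<in> Av m pats"
      using Cons_mem_Av_iff[OF assms] by (metis mem_Collect_eq)
    ultimately show "s \<in> Cons (Suc m) ` Av m pats" by (rule image_eqI)
  qed (use Cons_mem_Av_iff[OF assms] in auto)
  have "card (Av (Suc m) pats) = card (?max_first \<union> ?others)"
    by (rule arg_cong[where f = card]) blast
  also have "\<dots> = card ?max_first + card ?others"
    by (rule card_Un_disjoint) (auto simp: finite_Av)
  also have "card ?max_first = card (Av m pats)"
    unfolding max_first by (simp add: card_image)
  finally show ?thesis .
qed

lemma card_positions_less:
  assumes "distinct s" "set s = {1..n}" "x \<in> {1..n}"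
  shows "card {t. t < length s \<and> s!t < x} = x - 1"
proof -
  have "card {t. t < length s \<and> s!t < x} = length (filter (\<lambda>v. v < x) s)"
    by (simp add: length_filter_conv_card)
  also have "\<dots> = card ({v. v < x} \<inter> {1..n})"
    using assms by (simp add: distinct_length_filter)
  also have "{v. v < x} \<inter> {1..n} = {1..<x}" using assms(3) by auto
  finally show ?thesis by simp
qed

lemma card_positions_greater:
  assumes "distinct s" "set s = {1..n}"
  shows "card {t. t < length s \<and> x < s!t} = n - x"
proof -
  have "card {t. t < length s \<and> x < s!t} = length (filter (\<lambda>v. x < v) s)"
    by (simp add: length_filter_conv_card)
  also have "\<dots> = card ({v. x < v} \<inter> {1..n})"
    using assms by (simp add: distinct_length_filter)
  also have "{v. x < v} \<inter> {1..n} = {x<..n}" by auto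
  finally show ?thesis by simp
qed

definition decr_max_incr :: "nat \<Rightarrow> nat \<Rightarrow> nat list" where
  "decr_max_incr n p = rev [n-p..<n] @ n # [1..<n-p]"

definition head_decr_incr :: "nat \<Rightarrow> nat \<Rightarrow> nat list" where
  "head_decr_incr n a = a # rev [Suc a..<Suc n] @ [1..<a]"

lemma length_decr_max_incr: "p < n \<Longrightarrow> length (decr_max_incr n p) = n"
  by (simp add: decr_max_incr_def)

lemma nth_decr_max_incr:
  assumes "p < n" "i < n"
  shows "decr_max_incr n p ! i = (if i < p then n - 1 - i else if i = p then n else i - p)"
  using assms by (auto simp: decr_max_incr_def nth_append rev_nth nth_Cons')

lemma length_head_decr_incr: "0 < a \<Longrightarrow> a \<le> n \<Longrightarrow> length (head_decr_incr n a) = n"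
  by (simp add: head_decr_incr_def)

lemma nth_head_decr_incr:
  assumes "0 < a" "a \<le> n" "i < n"
  shows "head_decr_incr n a ! i = (if i = 0 then a else if i \<le> n - a then n + 1 - i else i - (n - a))"
  using assms by (auto simp: head_decr_incr_def nth_append rev_nth nth_Cons')

lemma decr_max_incr_mem_Av:
  assumes "0 < p" "n - 3 \<le> p" "p < n"
  shows "decr_max_incr n p \<in> Av n [[1,2,3],[1,3,2],[3,4,2,1]]"
proof -
  have "distinct (decr_max_incr n p)" "set (decr_max_incr n p) = {1..n}"
    using assms by (auto simp: decr_max_incr_def)
  moreover have "avoids (decr_max_incr n p) [1,2,3]" "avoids (decr_max_incr n p) [1,3,2]"
    unfolding avoids_def contains_3_iff
    using assms by (auto simp: length_decr_max_incr nth_decr_max_incr split: if_splits)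
  moreover have "avoids (decr_max_incr n p) [3,4,2,1]"
    unfolding avoids_def contains_4_iff
    using assms by (auto simp: length_decr_max_incr nth_decr_max_incr split: if_splits)
  ultimately show ?thesis by (simp add: mem_Av_iff)
qed

lemma head_decr_incr_mem_Av:
  assumes "0 < a" "a \<le> 3" "a < n"
  shows "head_decr_incr n a \<in> Av n [[1,2,3],[2,1,3],[3,4,2,1]]"
proof -
  have "distinct (head_decr_incr n a)" "set (head_decr_incr n a) = {1..n}"
    using assms by (auto simp: head_decr_incr_def)
  moreover have "avoids (head_decr_incr n a) [1,2,3]" "avoids (head_decr_incr n a) [2,1,3]"
    unfolding avoids_def contains_3_iff
    using assms by (auto simp: length_head_decr_incr nth_head_decr_incr split: if_splits)
  moreover have "avoids (head_decr_incr n a) [3,4,2,1]"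
    unfolding avoids_def contains_4_iff
    using assms by (auto simp: length_head_decr_incr nth_head_decr_incr split: if_splits)
  ultimately show ?thesis by (simp add: mem_Av_iff)
qed

locale perm_max_at =
  fixes n p :: nat and s :: "nat list"
  assumes distinct: "distinct s" and set_eq: "set s = {1..n}"
    and max_pos: "p < n" and nth_max: "s!p = n"
begin

lemma length_eq: "length s = n"
  using distinct set_eq by (rule length_perm)

lemma nth_bounds: "i < n \<Longrightarrow> 1 \<le> s!i \<and> s!i \<le> n"
  using nth_mem[of i s] set_eq length_eq by auto

lemma nth_eq_iff: "i < n \<Longrightarrow> j < n \<Longrightarrow> s!i = s!j \<longleftrightarrow> i = j"
  using distinct length_eq by (simp add: nth_eq_iff_index_eq)

lemma nth_less_max: "i < n \<Longrightarrow> i \<noteq> p \<Longrightarrow> s!i < n"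
  using nth_bounds nth_eq_iff[of i p] max_pos nth_max by fastforce

lemma exists_nth: "1 \<le> v \<Longrightarrow> v \<le> n \<Longrightarrow> \<exists>i<n. s!i = v"
  using set_eq length_eq by (metis atLeastAtMost_iff in_set_conv_nth)

lemma card_positions_below: "i < n \<Longrightarrow> card {t. t < n \<and> s!t < s!i} = s!i - 1"
  using card_positions_less[OF distinct set_eq] nth_bounds length_eq by simp

lemma card_positions_above: "card {t. t < n \<and> s!i < s!t} = n - s!i"
  using card_positions_greater[OF distinct set_eq] length_eq by simp

end

locale Av_123_132_3421_max_at = perm_max_at +
  assumes avoids_123: "avoids s [1,2,3]" and avoids_132: "avoids s [1,3,2]"
    and avoids_3421: "avoids s [3,4,2,1]" and max_pos_gt_0: "0 < p"
begin

lemma prefix_decreasing: "i < j \<Longrightarrow> j < p \<Longrightarrow> s!j < s!i"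
  using avoids_123D[OF avoids_123, of i j p] nth_less_max[of j] nth_eq_iff[of i j]
    max_pos nth_max length_eq by fastforce

lemma prefix_above_suffix: "i < p \<Longrightarrow> p < q \<Longrightarrow> q < n \<Longrightarrow> s!q < s!i"
  using avoids_132D[OF avoids_132, of i p q] nth_bounds[of q] nth_eq_iff[of i q]
    nth_max length_eq by fastforce

lemma suffix_increasing: "p < q \<Longrightarrow> q < r \<Longrightarrow> r < n \<Longrightarrow> s!q < s!r"
  using avoids_3421D[OF avoids_3421, of 0 p q r] nth_less_max[of 0]
    prefix_above_suffix[of 0 q] max_pos_gt_0 nth_max length_eq by fastforce

lemma suffix_length: "n - 3 \<le> p"
proof (rule ccontr)
  assume "\<not> n - 3 \<le> p"
  then have "p + 3 < n" by simp
  then show False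
    using avoids_123D[OF avoids_123, of "p + 1" "p + 2" "p + 3", unfolded length_eq]
      suffix_increasing[of "p + 1" "p + 2"] suffix_increasing[of "p + 2" "p + 3"] by simp
qed

lemma nth_suffix:
  assumes q: "p < q" "q < n"
  shows "s!q = q - p"
proof -
  have "s!t < s!q \<longleftrightarrow> p < t \<and> t < q" if "t < n" for t
  proof -
    consider "t < p" | "t = p" | "p < t" "t < q" | "t = q" | "q < t" by linarith
    then show ?thesis
      using that q prefix_above_suffix[of t q] suffix_increasing[of t q] suffix_increasing[of q t]
        nth_max nth_less_max[of q] by cases auto
  qed
  then have "{t. t < n \<and> s!t < s!q} = {p<..<q}" using q by auto
  then have "s!q - 1 = q - p - 1" using card_positions_below[of q] q by simp
  then show ?thesis using nth_bounds[of q] q by linarith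
qed

lemma nth_prefix:
  assumes i: "i < p"
  shows "s!i = n - 1 - i"
proof -
  have "s!i < s!t \<longleftrightarrow> t < i \<or> t = p" if "t < n" for t
  proof -
    consider "t < i" | "t = i" | "i < t" "t < p" | "t = p" | "p < t" by linarith
    then show ?thesis
      using that i prefix_decreasing[of t i] prefix_decreasing[of i t] prefix_above_suffix[of i t]
        nth_max nth_less_max[of i] max_pos by cases auto
  qed
  then have "{t. t < n \<and> s!i < s!t} = insert p {..<i}" using i max_pos by auto
  then show ?thesis using card_positions_above[of i] nth_bounds[of i] i max_pos by simp
qed

lemma eq_decr_max_incr: "s = decr_max_incr n p"
  by (rule nth_equalityI)
    (auto simp: length_eq length_decr_max_incr nth_decr_max_incr nth_prefix nth_suffix nth_max max_pos)

end

locale Av_123_213_3421_max_at = perm_max_at +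
  assumes avoids_123: "avoids s [1,2,3]" and avoids_213: "avoids s [2,1,3]"
    and avoids_3421: "avoids s [3,4,2,1]" and max_pos_gt_0: "0 < p"
begin

lemma head_bounds: "1 \<le> s!0 \<and> s!0 < n"
  using nth_bounds[of 0] nth_less_max[of 0] max_pos_gt_0 max_pos by auto

lemma max_pos_eq_1: "p = 1"
  using avoids_123_213D[OF avoids_123 avoids_213, of 0 1 p, unfolded length_eq]
    nth_less_max[of 0] nth_less_max[of 1] max_pos_gt_0 max_pos nth_max by fastforce

lemma above_head_decreasing: "0 < j \<Longrightarrow> j < k \<Longrightarrow> k < n \<Longrightarrow> s!0 < s!k \<Longrightarrow> s!k < s!j"
  using avoids_123_213D[OF avoids_123 avoids_213, of 0 j k, unfolded length_eq]
    nth_eq_iff[of j k] by fastforce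

lemma below_head_increasing:
  assumes "1 < k" "k < l" "l < n" "s!k < s!0"
  shows "s!k < s!l"
proof -
  have "s!0 < s!1" using head_bounds nth_max max_pos_eq_1 by simp
  then show ?thesis
    using avoids_3421D[OF avoids_3421, of 0 1 k l, unfolded length_eq] assms by auto
qed

lemma nth_above_head:
  assumes k: "0 < k" "k < n" "s!0 < s!k"
  shows "s!k = n + 1 - k"
proof -
  have "s!k < s!t \<longleftrightarrow> 0 < t \<and> t < k" if "t < n" for t
  proof -
    consider "t = 0" | "0 < t" "t < k" | "t = k" | "k < t" by linarith
    then show ?thesis
      using that k above_head_decreasing[of t k] above_head_decreasing[of k t] by cases auto
  qed
  then have "{t. t < n \<and> s!k < s!t} = {0<..<k}" using k by auto
  then show ?thesis using card_positions_above[of k] nth_bounds[of k] k by simp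
qed

lemma nth_decr_run:
  assumes k: "0 < k" "k \<le> n - s!0"
  shows "s!k = n + 1 - k"
proof -
  have "\<exists>t<n. s!t = n + 1 - k" using k by (intro exists_nth) auto
  then obtain t where t: "t < n" "s!t = n + 1 - k" by blast
  moreover have "s!0 < s!t" using t k by auto
  moreover from this have "0 < t" by (cases t) auto
  ultimately have "n + 1 - t = n + 1 - k" using nth_above_head[of t] t by auto
  then have "t = k" using t(1) k by linarith
  with t show ?thesis by simp
qed

lemma below_head: "n - s!0 < k \<Longrightarrow> k < n \<Longrightarrow> s!k < s!0"
  using nth_above_head[of k] nth_eq_iff[of k 0] by fastforce

lemma nth_incr_run:
  assumes k: "n - s!0 < k" "k < n"
  shows "s!k = k - (n - s!0)"
proof -
  define m where "m = n - s!0"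
  have "1 \<le> m" "m < k" using k head_bounds by (auto simp: m_def)
  have "s!k < s!0" using below_head k by blast
  have "s!t < s!k \<longleftrightarrow> m < t \<and> t < k" if "t < n" for t
  proof -
    consider "t = 0" | "0 < t" "t \<le> m" | "m < t" "t < k" | "t = k" | "k < t"
      by linarith
    then show ?thesis
    proof cases
      case 2
      then show ?thesis using nth_decr_run[of t] \<open>s!k < s!0\<close> by (auto simp: m_def)
    next
      case 3
      then show ?thesis
        using below_head_increasing[of t k] below_head[of t] \<open>1 \<le> m\<close> k by (auto simp: m_def)
    next
      case 5
      then show ?thesis
        using below_head_increasing[of k t] \<open>1 \<le> m\<close> \<open>m < k\<close> \<open>s!k < s!0\<close> that by auto
    qed (use \<open>s!k < s!0\<close> in auto)
  qed
  then have "{t. t < n \<and> s!t < s!k} = {m<..<k}" using k by auto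
  then have "s!k - 1 = k - m - 1" using card_positions_below[of k] k by simp
  then have "s!k = k - m" using nth_bounds[of k] \<open>m < k\<close> k by linarith
  then show ?thesis by (simp add: m_def)
qed

lemma head_le_3: "s!0 \<le> 3"
proof (rule ccontr)
  let ?m = "n - s!0"
  assume "\<not> s!0 \<le> 3"
  then have "?m + 3 < n" using head_bounds by auto
  then show False
    using avoids_123D[OF avoids_123, of "?m + 1" "?m + 2" "?m + 3", unfolded length_eq]
      nth_incr_run[of "?m + 1"] nth_incr_run[of "?m + 2"] nth_incr_run[of "?m + 3"] by simp
qed

lemma eq_head_decr_incr: "s = head_decr_incr n (s!0)"
proof (rule nth_equalityI)
  show "length s = length (head_decr_incr n (s!0))"
    using head_bounds by (simp add: length_eq length_head_decr_incr)
  fix i assume "i < length s"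
  then show "s!i = head_decr_incr n (s!0) ! i"
    using head_bounds nth_decr_run[of i] nth_incr_run[of i]
    by (simp add: length_eq nth_head_decr_incr)
qed

end

lemma perm_max_at_if_hd_ne:
  assumes "distinct s" "set s = {1..Suc m}" "hd s \<noteq> Suc m"
  obtains p where "0 < p" "perm_max_at (Suc m) p s"
proof -
  have len: "length s = Suc m" using assms(1,2) by (rule length_perm)
  have "Suc m \<in> set s" using assms(2) by simp
  then obtain p where p: "p < Suc m" "s!p = Suc m" by (auto simp: in_set_conv_nth len)
  moreover have "s \<noteq> []" using len by auto
  with p assms(3) have "0 < p" by (metis gr0I hd_conv_nth)
  ultimately show thesis using that assms(1,2) by (simp add: perm_max_at_def)
qed

lemma hd_ne_max_Av_123_132_3421:
  "{s \<in> Av (Suc m) [[1,2,3],[1,3,2],[3,4,2,1]]. hd s \<noteq> Suc m} =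
     decr_max_incr (Suc m) ` {max 1 (m - 2)..m}"
proof (intro set_eqI iffI)
  fix s assume "s \<in> {s \<in> Av (Suc m) [[1,2,3],[1,3,2],[3,4,2,1]]. hd s \<noteq> Suc m}"
  then have s: "distinct s" "set s = {1..Suc m}" "hd s \<noteq> Suc m"
    "avoids s [1,2,3]" "avoids s [1,3,2]" "avoids s [3,4,2,1]"
    by (auto simp: mem_Av_iff)
  obtain p where "0 < p" "perm_max_at (Suc m) p s" using s(1-3) by (rule perm_max_at_if_hd_ne)
  with s interpret Av_123_132_3421_max_at "Suc m" p s
    by (simp add: Av_123_132_3421_max_at_def Av_123_132_3421_max_at_axioms_def)
  show "s \<in> decr_max_incr (Suc m) ` {max 1 (m - 2)..m}"
    using eq_decr_max_incr suffix_length max_pos max_pos_gt_0 by (intro image_eqI[of _ _ p]) auto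
next
  fix s assume "s \<in> decr_max_incr (Suc m) ` {max 1 (m - 2)..m}"
  then obtain p where p: "max 1 (m - 2) \<le> p" "p \<le> m" and s: "s = decr_max_incr (Suc m) p"
    by auto
  moreover have "s \<noteq> []" using s by (simp add: decr_max_incr_def)
  ultimately have "hd s = m" by (simp add: hd_conv_nth nth_decr_max_incr)
  with p s show "s \<in> {s \<in> Av (Suc m) [[1,2,3],[1,3,2],[3,4,2,1]]. hd s \<noteq> Suc m}"
    using decr_max_incr_mem_Av[of p "Suc m"] by simp
qed

lemma card_hd_ne_max_Av_123_132_3421:
  "card {s \<in> Av (Suc m) [[1,2,3],[1,3,2],[3,4,2,1]]. hd s \<noteq> Suc m} = min 3 m"
proof -
  have "inj_on (decr_max_incr (Suc m)) {max 1 (m - 2)..m}"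
  proof (rule inj_onI)
    fix p q assume "p \<in> {max 1 (m - 2)..m}" "q \<in> {max 1 (m - 2)..m}"
      and eq: "decr_max_incr (Suc m) p = decr_max_incr (Suc m) q"
    have "decr_max_incr (Suc m) p ! p = Suc m"
      using \<open>p \<in> _\<close> by (simp add: nth_decr_max_incr)
    then have "decr_max_incr (Suc m) q ! p = Suc m"
      unfolding eq .
    with \<open>p \<in> _\<close> \<open>q \<in> _\<close> show "p = q"
      by (auto simp: nth_decr_max_incr split: if_splits)
  qed
  then show ?thesis
    unfolding hd_ne_max_Av_123_132_3421 by (simp add: card_image)
qed

lemma hd_ne_max_Av_123_213_3421:
  "{s \<in> Av (Suc m) [[1,2,3],[2,1,3],[3,4,2,1]]. hd s \<noteq> Suc m} =
     head_decr_incr (Suc m) ` {1..min 3 m}"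
proof (intro set_eqI iffI)
  fix s assume "s \<in> {s \<in> Av (Suc m) [[1,2,3],[2,1,3],[3,4,2,1]]. hd s \<noteq> Suc m}"
  then have s: "distinct s" "set s = {1..Suc m}" "hd s \<noteq> Suc m"
    "avoids s [1,2,3]" "avoids s [2,1,3]" "avoids s [3,4,2,1]"
    by (auto simp: mem_Av_iff)
  obtain p where "0 < p" "perm_max_at (Suc m) p s" using s(1-3) by (rule perm_max_at_if_hd_ne)
  with s interpret Av_123_213_3421_max_at "Suc m" p s
    by (simp add: Av_123_213_3421_max_at_def Av_123_213_3421_max_at_axioms_def)
  show "s \<in> head_decr_incr (Suc m) ` {1..min 3 m}"
    using eq_head_decr_incr head_le_3 head_bounds by (intro image_eqI[of _ _ "s!0"]) auto
next
  fix s assume "s \<in> head_decr_incr (Suc m) ` {1..min 3 m}"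
  then obtain a where a: "1 \<le> a" "a \<le> min 3 m" and s: "s = head_decr_incr (Suc m) a"
    by auto
  then have "hd s = a" by (simp add: head_decr_incr_def)
  with a s show "s \<in> {s \<in> Av (Suc m) [[1,2,3],[2,1,3],[3,4,2,1]]. hd s \<noteq> Suc m}"
    using head_decr_incr_mem_Av[of a "Suc m"] by simp
qed

lemma card_hd_ne_max_Av_123_213_3421:
  "card {s \<in> Av (Suc m) [[1,2,3],[2,1,3],[3,4,2,1]]. hd s \<noteq> Suc m} = min 3 m"
proof -
  have "inj_on (head_decr_incr (Suc m)) {1..min 3 m}"
    by (rule inj_onI) (metis head_decr_incr_def list.sel(1))
  then show ?thesis
    unfolding hd_ne_max_Av_123_213_3421 by (simp add: card_image)
qed

lemma eq_3n_minus_5_if_recurrence: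
  fixes c :: "nat \<Rightarrow> nat"
  assumes "c 0 = 1" and step: "\<And>m. c (Suc m) = c m + min 3 m" and "3 \<le> n"
  shows "c n = 3 * n - 5"
  using \<open>3 \<le> n\<close>
proof (induction n rule: nat_induct_at_least)
  case base
  then show ?case using \<open>c 0 = 1\<close> step[of 0] step[of 1] step[of 2] by (simp add: numeral_eq_Suc)
next
  case (Suc n)
  then show ?case using step[of n] by simp
qed

theorem theorem3p5:
  fixes n :: nat
  assumes "n \<ge> 3"
  shows "card (Av n [[1,2,3],[1,3,2],[3,4,2,1]]) = 3 * n - 5
       \<and> card (Av n [[1,2,3],[2,1,3],[3,4,2,1]]) = 3 * n - 5"
proof
  let ?P = "[[1,2,3],[1,3,2],[3,4,2,1]] :: nat list list"
  have heads: "\<forall>p\<in>set ?P. starts_below_max p"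
    by (auto simp: starts_below_max_def intro: exI[of _ 1] exI[of _ 2])
  show "card (Av n ?P) = 3 * n - 5"
  proof (rule eq_3n_minus_5_if_recurrence[where c = "\<lambda>n. card (Av n ?P)", OF _ _ assms])
    show "card (Av 0 ?P) = 1" by (simp add: Av_0)
    show "card (Av (Suc m) ?P) = card (Av m ?P) + min 3 m" for m
      by (simp only: card_Av_Suc[OF heads] card_hd_ne_max_Av_123_132_3421)
  qed
next
  let ?P = "[[1,2,3],[2,1,3],[3,4,2,1]] :: nat list list"
  have heads: "\<forall>p\<in>set ?P. starts_below_max p"
    by (auto simp: starts_below_max_def intro: exI[of _ 1] exI[of _ 2])
  show "card (Av n ?P) = 3 * n - 5"
  proof (rule eq_3n_minus_5_if_recurrence[where c = "\<lambda>n. card (Av n ?P)", OF _ _ assms])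
    show "card (Av 0 ?P) = 1" by (simp add: Av_0)
    show "card (Av (Suc m) ?P) = card (Av m ?P) + min 3 m" for m
      by (simp only: card_Av_Suc[OF heads] card_hd_ne_max_Av_123_213_3421)
  qed
qed

end
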